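(* Let $p\in(0,1)$ be fixed. With high probability, for every set $V\subset[n]$ of size at least $\frac{3}{p}\ln n$, the number of vertices of $[n]\setminus V$ having at most $\frac{1}{2}\ln n$ neighbours in $V$ in $G(n,p)$ is less than $\ln^3 n$.
   Context: $G(n,p)$ is the binomial random graph on $[n]$ with edge probability $p$; with high probability means with probability tending to $1$ as $n\to\infty$. *)

theory Defs
  imports "HOL-Probability.Probability"
begin

definition all_edges :: "nat \<Rightarrow> nat set set" where
  "all_edges n = {e. e \<subseteq> {1..n} \<and> card e = 2}"

text \<open>The binomial random graph G(n,p): each potential edge is present independently
  with probability p. A graph is represented by the indicator of its edge set
  (False outside the potential edges).\<close>
definition gnp :: "nat \<Rightarrow> real \<Rightarrow> (nat set \<Rightarrow> bool) pmf" where
  "gnp n p = Pi_pmf (all_edges n) False (\<lambda>_. bernoulli_pmf p)"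

definition nbrs_in :: "(nat set \<Rightarrow> bool) \<Rightarrow> nat set \<Rightarrow> nat \<Rightarrow> nat set" where
  "nbrs_in G V v = {u \<in> V. u \<noteq> v \<and> G {u, v}}"

end

theory Submission
  imports Defs "HOL-Real_Asymp.Real_Asymp"
begin

text \<open>If the event fails, some \<open>V\<close> with \<open>|V| \<ge> 3 ln n / p\<close> has \<open>\<ge> ln\<^sup>3 n\<close> vertices outside
  with at most \<open>ln n / 2\<close> neighbours in \<open>V\<close>; shrinking \<open>V\<close> and that vertex set gives sets
  \<open>V'\<close>, \<open>U\<close> of sizes exactly \<open>k = \<lceil>3 ln n / p\<rceil>\<close> and \<open>m = \<lceil>ln\<^sup>3 n\<rceil>\<close>. Then at most \<open>m ln n / 2\<close>
  of the \<open>m k\<close> independent potential edges between \<open>U\<close> and \<open>V'\<close> are present, which by an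
  exponential Markov bound has probability at most \<open>exp (m ln n / 2 - p (1 - e\<^sup>-\<^sup>1) m k)\<close>.
  A union bound over the at most \<open>n\<^sup>k\<^sup>+\<^sup>m\<close> pairs \<open>(V', U)\<close> leaves
  \<open>exp (O(ln\<^sup>2 n) - (3/2 - 3 e\<^sup>-\<^sup>1) ln\<^sup>4 n) \<rightarrow> 0\<close>, as \<open>3/2 - 3 e\<^sup>-\<^sup>1 > 0\<close>.\<close>

lemma finite_all_edges: "finite (all_edges n)"
  by (rule finite_subset[of _ "Pow {1..n}"]) (auto simp: all_edges_def)

lemma finite_set_pmf_gnp: "finite (set_pmf (gnp n p))"
proof (rule finite_subset)
  show "set_pmf (gnp n p) \<subseteq> PiE_dflt (all_edges n) False (\<lambda>_. UNIV)"
    unfolding gnp_def using set_Pi_pmf_subset[OF finite_all_edges, of n False]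
    by (auto simp: PiE_dflt_def)
  show "finite (PiE_dflt (all_edges n) False (\<lambda>_. UNIV :: bool set))"
    by (intro finite_PiE_dflt finite_all_edges) auto
qed

lemma expectation_gnp_exp_neg_card_edges:
  assumes "0 \<le> p" "p \<le> 1" and S: "S \<subseteq> all_edges n"
  shows "measure_pmf.expectation (gnp n p) (\<lambda>G. exp (- real (card {e\<in>S. G e})))
         = (1 - p * (1 - exp (-1))) ^ card S"
proof -
  let ?A = "all_edges n"
  define f where "f = (\<lambda>e b. if e \<in> S \<and> b then exp (-1::real) else 1)"
  have prod_f: "(\<Prod>e\<in>?A. f e (G e)) = exp (- real (card {e\<in>S. G e}))" for G
  proof -
    have "(\<Prod>e\<in>?A. f e (G e)) = (\<Prod>e\<in>{e\<in>S. G e}. exp (-1))"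
      using S unfolding f_def by (intro prod.mono_neutral_cong_right finite_all_edges) auto
    also have "\<dots> = exp (- real (card {e\<in>S. G e}))"
      by (simp add: exp_of_nat_mult[symmetric])
    finally show ?thesis .
  qed
  have "measure_pmf.expectation (gnp n p) (\<lambda>G. exp (- real (card {e\<in>S. G e})))
      = measure_pmf.expectation (gnp n p) (\<lambda>G. \<Prod>e\<in>?A. f e (G e))"
    by (simp add: prod_f)
  also have "\<dots> = (\<Prod>e\<in>?A. measure_pmf.expectation (bernoulli_pmf p) (f e))"
    unfolding gnp_def
    by (rule expectation_prod_Pi_pmf[OF finite_all_edges])
      (auto simp: f_def intro: integrable_measure_pmf_finite)
  also have "\<dots> = (\<Prod>e\<in>S. 1 - p * (1 - exp (-1)))"
    using assms by (intro prod.mono_neutral_cong_right finite_all_edges)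
      (auto simp: f_def algebra_simps)
  finally show ?thesis by simp
qed

lemma prob_gnp_few_edges_le:
  assumes "0 \<le> p" "p \<le> 1" and S: "S \<subseteq> all_edges n"
  shows "measure_pmf.prob (gnp n p) {G. real (card {e\<in>S. G e}) \<le> T}
         \<le> exp (T - p * (1 - exp (-1)) * card S)"
proof -
  let ?q = "1 - p * (1 - exp (-1))"
  have "measure_pmf.prob (gnp n p) {G. real (card {e\<in>S. G e}) \<le> T}
      = measure_pmf.prob (gnp n p)
          {G \<in> space (measure_pmf (gnp n p)). exp (- real (card {e\<in>S. G e})) \<ge> exp (-T)}"
    by simp
  also have "\<dots> \<le> measure_pmf.expectation (gnp n p) (\<lambda>G. exp (- real (card {e\<in>S. G e}))) / exp (-T)"
    by (rule integral_Markov_inequality_measure)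
      (auto intro: integrable_measure_pmf_finite finite_set_pmf_gnp)
  also have "\<dots> = exp T * ?q ^ card S"
    using expectation_gnp_exp_neg_card_edges[OF assms] by (simp add: exp_minus field_simps)
  also have "\<dots> \<le> exp T * exp (- p * (1 - exp (-1))) ^ card S"
  proof -
    have "p * (1 - exp (-1)) \<le> 1"
      using assms by (intro mult_le_one) auto
    then show ?thesis
      using exp_ge_add_one_self[of "- p * (1 - exp (-1))"]
      by (intro mult_left_mono power_mono) auto
  qed
  also have "\<dots> = exp (T - p * (1 - exp (-1)) * card S)"
    unfolding exp_of_nat_mult[symmetric] exp_add[symmetric] by (simp add: algebra_simps)
  finally show ?thesis .
qed

definition edges_between :: "nat set \<Rightarrow> nat set \<Rightarrow> nat set set" where
  "edges_between U V = (\<lambda>(u, v). {u, v}) ` (U \<times> V)"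

lemma inj_on_doubleton_disjoint:
  assumes "U \<inter> V = {}"
  shows "inj_on (\<lambda>(u, v). {u, v}) (U \<times> V)"
  using assms by (auto simp: inj_on_def doubleton_eq_iff)

lemma edges_between_subset_all_edges:
  assumes "U \<subseteq> {1..n}" "V \<subseteq> {1..n}" "U \<inter> V = {}"
  shows "edges_between U V \<subseteq> all_edges n"
  using assms by (auto simp: edges_between_def all_edges_def card_insert_if)

lemma card_edges_between:
  assumes "U \<inter> V = {}"
  shows "card (edges_between U V) = card U * card V"
  unfolding edges_between_def
  using card_image[OF inj_on_doubleton_disjoint[OF assms]] by (simp add: card_cartesian_product)

lemma sum_card_nbrs_in_eq_card_edges_between:
  assumes "finite U" "finite V" "U \<inter> V = {}"
  shows "(\<Sum>u\<in>U. card (nbrs_in G V u)) = card {e \<in> edges_between U V. G e}"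
proof -
  have "{e \<in> edges_between U V. G e} = (\<lambda>(u, v). {u, v}) ` (SIGMA u:U. {v\<in>V. G {u, v}})"
    by (auto simp: edges_between_def)
  also have "card \<dots> = card (SIGMA u:U. {v\<in>V. G {u, v}})"
    by (rule card_image, rule inj_on_subset[OF inj_on_doubleton_disjoint[OF assms(3)]]) auto
  also have "\<dots> = (\<Sum>u\<in>U. card {v\<in>V. G {u, v}})"
    using assms by simp
  also have "\<dots> = (\<Sum>u\<in>U. card (nbrs_in G V u))"
    unfolding nbrs_in_def using assms(3)
    by (intro sum.cong refl arg_cong[where f = card]) (auto simp: insert_commute)
  finally show ?thesis by simp
qed

lemma prob_gnp_all_few_nbrs_le:
  fixes t :: real
  assumes "0 \<le> p" "p \<le> 1" "U \<subseteq> {1..n}" "V \<subseteq> {1..n}" "U \<inter> V = {}"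
  shows "measure_pmf.prob (gnp n p) {G. \<forall>u\<in>U. real (card (nbrs_in G V u)) \<le> t}
         \<le> exp (card U * t - p * (1 - exp (-1)) * (card U * card V))"
proof -
  let ?S = "edges_between U V"
  have fin: "finite U" "finite V"
    using assms(3,4) by (auto intro: finite_subset)
  have "{G. \<forall>u\<in>U. real (card (nbrs_in G V u)) \<le> t} \<subseteq> {G. real (card {e\<in>?S. G e}) \<le> card U * t}"
  proof safe
    fix G assume few: "\<forall>u\<in>U. real (card (nbrs_in G V u)) \<le> t"
    have "real (card {e\<in>?S. G e}) = (\<Sum>u\<in>U. real (card (nbrs_in G V u)))"
      by (simp flip: sum_card_nbrs_in_eq_card_edges_between[OF fin assms(5)])
    also have "\<dots> \<le> (\<Sum>u\<in>U. t)"
      using few by (intro sum_mono) auto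
    finally show "real (card {e\<in>?S. G e}) \<le> card U * t" by simp
  qed
  then have "measure_pmf.prob (gnp n p) {G. \<forall>u\<in>U. real (card (nbrs_in G V u)) \<le> t}
      \<le> measure_pmf.prob (gnp n p) {G. real (card {e\<in>?S. G e}) \<le> card U * t}"
    by (intro measure_pmf.finite_measure_mono) auto
  also have "\<dots> \<le> exp (card U * t - p * (1 - exp (-1)) * card ?S)"
    using assms by (intro prob_gnp_few_edges_le edges_between_subset_all_edges)
  finally show ?thesis
    using card_edges_between[OF assms(5)] by simp
qed

lemma binomial_le_power: "n choose k \<le> n ^ k"
  by (cases "k \<le> n") (auto simp: binomial_le_pow binomial_eq_0)

definition low_degree_vertices :: "(nat set \<Rightarrow> bool) \<Rightarrow> nat \<Rightarrow> nat set \<Rightarrow> real \<Rightarrow> nat set" where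
  "low_degree_vertices G n V t = {v \<in> {1..n} - V. real (card (nbrs_in G V v)) \<le> t}"

lemma nbrs_in_mono: "V' \<subseteq> V \<Longrightarrow> nbrs_in G V' v \<subseteq> nbrs_in G V v"
  by (auto simp: nbrs_in_def)

lemma prob_gnp_many_low_degree_le:
  fixes t :: real
  assumes "0 \<le> p" "p \<le> 1"
  shows "measure_pmf.prob (gnp n p)
           {G. \<exists>V \<subseteq> {1..n}. k \<le> card V \<and>
                 m \<le> card (low_degree_vertices G n V t)}
         \<le> real n ^ (k + m) * exp (m * t - p * (1 - exp (-1)) * (real m * real k))"
    (is "measure_pmf.prob _ ?many_low \<le> _")
proof -
  define P where "P = {(V, U). V \<subseteq> {1..n} \<and> card V = k \<and> U \<subseteq> {1..n} \<and> card U = m \<and> U \<inter> V = {}}"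
  define E where "E = (\<lambda>(V, U). {G. \<forall>u\<in>U. real (card (nbrs_in G V u)) \<le> t})"
  define B where "B = exp (m * t - p * (1 - exp (-1)) * (real m * real k))"
  have P_sub: "P \<subseteq> {V. V \<subseteq> {1..n} \<and> card V = k} \<times> {U. U \<subseteq> {1..n} \<and> card U = m}"
    by (auto simp: P_def)
  then have finP: "finite P"
    by (rule finite_subset) auto
  have "?many_low \<subseteq> (\<Union>x\<in>P. E x)"
  proof safe
    fix G V
    assume V: "V \<subseteq> {1..n}" "k \<le> card V"
      and m: "m \<le> card (low_degree_vertices G n V t)"
    obtain V' where V': "V' \<subseteq> V" "card V' = k"
      using obtain_subset_with_card_n[OF V(2)] by blast
    obtain U where U: "U \<subseteq> low_degree_vertices G n V t" "card U = m"
      using obtain_subset_with_card_n[OF m] by blast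
    have "real (card (nbrs_in G V' u)) \<le> t" if "u \<in> U" for u
    proof -
      have "card (nbrs_in G V' u) \<le> card (nbrs_in G V u)"
        using V(1) V'(1) by (intro card_mono nbrs_in_mono) (auto simp: nbrs_in_def intro: finite_subset)
      then show ?thesis using U(1) that by (force simp: low_degree_vertices_def)
    qed
    moreover have "(V', U) \<in> P"
      using V V' U by (auto simp: P_def low_degree_vertices_def)
    ultimately show "G \<in> (\<Union>x\<in>P. E x)"
      by (auto simp: E_def)
  qed
  then have "measure_pmf.prob (gnp n p) ?many_low \<le> measure_pmf.prob (gnp n p) (\<Union>x\<in>P. E x)"
    by (intro measure_pmf.finite_measure_mono) auto
  also have "\<dots> \<le> (\<Sum>x\<in>P. measure_pmf.prob (gnp n p) (E x))"
    by (rule measure_pmf.finite_measure_subadditive_finite[OF finP]) auto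
  also have "\<dots> \<le> (\<Sum>x\<in>P. B)"
  proof (intro sum_mono)
    fix x assume "x \<in> P"
    then obtain V U where "x = (V, U)" "V \<subseteq> {1..n}" "U \<subseteq> {1..n}" "U \<inter> V = {}"
      "card V = k" "card U = m"
      by (auto simp: P_def)
    then show "measure_pmf.prob (gnp n p) (E x) \<le> B"
      using prob_gnp_all_few_nbrs_le[OF assms, of U n V t] by (simp add: E_def B_def)
  qed
  also have "\<dots> \<le> real (card ({V. V \<subseteq> {1..n} \<and> card V = k} \<times> {U. U \<subseteq> {1..n} \<and> card U = m})) * B"
  proof -
    have "card P \<le> card ({V. V \<subseteq> {1..n} \<and> card V = k} \<times> {U. U \<subseteq> {1..n} \<and> card U = m})"
      using P_sub by (intro card_mono) auto
    then show ?thesis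
      unfolding sum_constant by (intro mult_right_mono of_nat_mono) (simp_all add: B_def)
  qed
  also have "\<dots> = real (n choose k) * real (n choose m) * B"
    by (simp add: card_cartesian_product n_subsets)
  also have "\<dots> \<le> real n ^ (k + m) * B"
    unfolding power_add B_def
    by (intro mult_right_mono mult_mono) (auto simp flip: of_nat_power intro: binomial_le_power)
  finally show ?thesis
    by (simp add: B_def)
qed

lemma exp_neg_one_less_half: "exp (-1::real) < 1/2"
proof -
  have "(3/2)^2 \<le> exp (1/2::real) ^ 2"
    using exp_ge_add_one_self[of "1/2::real"] by (intro power_mono) auto
  also have "exp (1/2::real) ^ 2 = exp 1"
    by (simp add: exp_of_nat_mult[symmetric])
  finally show ?thesis
    by (simp add: exp_minus field_simps power2_eq_square)
qed

lemma prob_gnp_many_low_degree_ln_le: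
  assumes p: "0 < p" "p < 1" and n: "1 \<le> n"
  shows "measure_pmf.prob (gnp n p)
           {G. \<exists>V \<subseteq> {1..n}. real (card V) \<ge> 3 / p * ln (real n) \<and>
                 real (card (low_degree_vertices G n V (ln (real n) / 2))) \<ge> ln (real n) ^ 3}
         \<le> exp (3 / p * ln (real n) ^ 2 + ln (real n) - (3/2 - 3 * exp (-1)) * ln (real n) ^ 4)"
proof -
  define L where "L = ln (real n)"
  define k where "k = nat \<lceil>3 / p * L\<rceil>"
  define m where "m = nat \<lceil>L ^ 3\<rceil>"
  define c where "c = exp (-1::real)"
  have L: "0 \<le> L" using n by (simp add: L_def)
  have c: "0 < c" "c < 1/2"
    using exp_neg_one_less_half by (simp_all add: c_def)
  have k: "3 / p * L \<le> k" "k \<le> 3 / p * L + 1"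
    using p L by (simp_all add: k_def)
  have m: "L ^ 3 \<le> m"
    by (simp add: m_def) linarith
  have "measure_pmf.prob (gnp n p)
           {G. \<exists>V \<subseteq> {1..n}. real (card V) \<ge> 3 / p * L \<and>
                 real (card (low_degree_vertices G n V (L / 2))) \<ge> L ^ 3}
      \<le> measure_pmf.prob (gnp n p)
           {G. \<exists>V \<subseteq> {1..n}. k \<le> card V \<and>
                 m \<le> card (low_degree_vertices G n V (L / 2))}"
    unfolding k_def m_def
    by (intro measure_pmf.finite_measure_mono) (auto simp: nat_ceiling_le_eq)
  also have "\<dots> \<le> real n ^ (k + m) * exp (m * (L / 2) - p * (1 - c) * (real m * real k))"
    unfolding c_def using p by (intro prob_gnp_many_low_degree_le) auto
  also have "\<dots> = exp ((k + m) * L + m * L / 2 - p * (1 - c) * (real m * real k))"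
  proof -
    have n_pow: "real n ^ (k + m) = exp (real (k + m) * L)"
      unfolding exp_of_nat_mult L_def using n by simp
    show ?thesis
      unfolding n_pow exp_add[symmetric] by (simp add: algebra_simps)
  qed
  also have "\<dots> \<le> exp (3 / p * L ^ 2 + L - (3/2 - 3 * c) * L ^ 4)"
  proof -
    have "3 * L * (1 - c) * m \<le> p * k * (1 - c) * m"
      using k(1) p c by (intro mult_right_mono) (auto simp: field_simps)
    moreover have "k * L \<le> (3 / p * L + 1) * L"
      using k(2) L by (rule mult_right_mono)
    moreover have "(3/2 - 3 * c) * (L ^ 3 * L) \<le> (3/2 - 3 * c) * (m * L)"
      using c m L by (intro mult_left_mono mult_right_mono) auto
    ultimately show ?thesis
      by (simp add: power2_eq_square power4_eq_xxxx power3_eq_cube algebra_simps)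
  qed
  finally show ?thesis by (simp add: L_def c_def)
qed

theorem claim8:
  fixes p :: real
  assumes "0 < p" "p < 1"
  shows "(\<lambda>n. measure_pmf.prob (gnp n p)
           {G. \<forall>V. V \<subseteq> {1..n} \<and> real (card V) \<ge> 3 / p * ln (real n) \<longrightarrow>
                 real (card {v \<in> {1..n} - V. real (card (nbrs_in G V v)) \<le> ln (real n) / 2})
                   < ln (real n) ^ 3})
         \<longlonglongrightarrow> 1"
    (is "(\<lambda>n. measure_pmf.prob _ (?good n)) \<longlonglongrightarrow> 1")
proof -
  define \<epsilon> where "\<epsilon> n = exp (3 / p * ln (real n) ^ 2 + ln (real n)
                             - (3/2 - 3 * exp (-1)) * ln (real n) ^ 4)" for n :: nat
  have "0 < 3/2 - 3 * exp (-1::real)"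
    using exp_neg_one_less_half by simp
  then have "\<epsilon> \<longlonglongrightarrow> 0"
    unfolding \<epsilon>_def using assms by real_asymp
  then have lim: "(\<lambda>n. 1 - \<epsilon> n) \<longlonglongrightarrow> 1"
    using tendsto_diff[OF tendsto_const[of 1]] by fastforce
  have lower: "eventually (\<lambda>n. 1 - \<epsilon> n \<le> measure_pmf.prob (gnp n p) (?good n)) sequentially"
    using eventually_ge_at_top[of 1]
  proof eventually_elim
    case (elim n)
    have "UNIV - ?good n = {G. \<exists>V \<subseteq> {1..n}. real (card V) \<ge> 3 / p * ln (real n) \<and>
             real (card (low_degree_vertices G n V (ln (real n) / 2))) \<ge> ln (real n) ^ 3}"
      by (simp add: set_eq_iff not_less low_degree_vertices_def)
    then have "measure_pmf.prob (gnp n p) (UNIV - ?good n) \<le> \<epsilon> n"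
      unfolding \<epsilon>_def by (simp only: prob_gnp_many_low_degree_ln_le[OF assms elim])
    then show ?case
      using measure_pmf.prob_compl[of "?good n" "gnp n p"] by simp
  qed
  have upper: "eventually (\<lambda>n. measure_pmf.prob (gnp n p) (?good n) \<le> 1) sequentially"
    by (simp add: measure_pmf.prob_le_1)
  show ?thesis
    by (rule tendsto_sandwich[OF lower upper lim tendsto_const])
qed

end
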